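(* Let $\Upsilon_{0:k}$ be the Choi operator of a valid $k$-slot process tensor on $n$ qubits, and let $\Upsilon^{\mathcal{T}_P}_{0:k}:=\mathcal{T}_P^{(k)}(\Upsilon_{0:k})$ be its multi-time Pauli twirl. Then $\Upsilon^{\mathcal{T}_P}_{0:k}$ admits the process-separable decomposition \[ \Upsilon^{\mathcal{T}_P}_{0:k}=\sum_{\mathcal{P}\in\mathbb{P}^{(n,k)}}\Pr(\mathcal{P})\,\Upsilon_{\mathcal{P}},\qquad \Upsilon_{\mathcal{P}}=\bigotimes_{j=0}^k\Pi_{P_j}, \] where, for a trajectory $\mathcal{P}=(P_0,\dots,P_k)$, \[ \Pr(\mathcal{P})=\frac{w(\mathcal{P})}{\mathcal{N}},\qquad w(\mathcal{P}):=\mathrm{Tr}\Big[\Big(\bigotimes_{j=0}^k\Pi_{P_j}\Big)\Upsilon_{0:k}\Big]\ge 0,\qquad \mathcal{N}:=\sum_{\mathcal{P}\in\mathbb{P}^{(n,k)}}w(\mathcal{P}), \] and the numbers $\Pr(\mathcal{P})$ form a valid probability distribution on $\mathbb{P}^{(n,k)}$.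
   Context: $\mathbb{P}^{(n)}=\{I,X,Y,Z\}^{\otimes n}$ is the set of $n$-qubit Pauli operators (modulo phase), and $\mathbb{P}^{(n,k)}=(\mathbb{P}^{(n)})^{k+1}$ is the set of spatiotemporal Pauli trajectories $\mathcal{P}=(P_0,\dots,P_k)$. For $P\in\mathbb{P}^{(n)}$, $|P\rangle\!\rangle=(\mathbb{I}\otimes P)\sum_i|i\rangle|i\rangle$ is its vectorisation and $\Pi_P=|P\rangle\!\rangle\langle\!\langle P|$ (the Choi operator of the channel $\rho\mapsto P\rho P$), acting on $\mathcal{H}_{\mathfrak{i}_j}\otimes\mathcal{H}_{\mathfrak{o}_j}$ in the $j$-th factor. A $k$-slot process tensor has Choi operator $\Upsilon_{0:k}$ on $\bigotimes_{j=0}^k(\mathcal{H}_{\mathfrak{i}_j}\otimes\mathcal{H}_{\mathfrak{o}_j})$ (each factor an $n$-qubit space, $\mathfrak{i}_j,\mathfrak{o}_j$ the input/output at time step $j$); it is valid iff $\Upsilon_{0:k}\ge0$ and there are operators $\Upsilon_{0:j}$ on the first $j+1$ slots ($\Upsilon_{0:k}$ the given one) with $\mathrm{Tr}_{\mathfrak{o}_j}[\Upsilon_{0:j}]=\Upsilon_{0:j-1}\otimes\mathbb{I}_{\mathfrak{i}_j}$ for $j=1,\dots,k$ and $\mathrm{Tr}_{\mathfrak{o}_0}[\Upsilon_{0:0}]=\mathbb{I}_{\mathfrak{i}_0}$ (Choi operators use the unnormalised maximally entangled vector). The multi-time Pauli twirl is $\mathcal{T}_P^{(k)}(\Upsilon)=|\mathbb{P}^{(n)}|^{-(k+1)}\sum_{P_0,\dots,P_k\in\mathbb{P}^{(n)}}(\bigotimes_{j}P_j\otimes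 P_j)\Upsilon(\bigotimes_j P_j\otimes P_j)$, the $j$-th pair acting on $\mathcal{H}_{\mathfrak{i}_j}\otimes\mathcal{H}_{\mathfrak{o}_j}$. An operator is process-separable if it is a convex combination of tensor products $\Upsilon_0\otimes\cdots\otimes\Upsilon_k$ of Choi operators of CPTP channels (one per time step). *)

theory Defs
  imports "Jordan_Normal_Form.Matrix"
begin

text \<open>A multi-party space
  H_1 (x) ... (x) H_m is encoded via the Kronecker product, first factor most
  significant (index of |a>|b> is a * dim H_2 + b).\<close>

definition kron :: "complex mat \<Rightarrow> complex mat \<Rightarrow> complex mat" where
  "kron A B = mat (dim_row A * dim_row B) (dim_col A * dim_col B)
     (\<lambda>(i,j). A $$ (i div dim_row B, j div dim_col B) * B $$ (i mod dim_row B, j mod dim_col B))"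

definition kron_list :: "complex mat list \<Rightarrow> complex mat" where
  "kron_list As = foldr kron As (1\<^sub>m 1)"

definition msum :: "nat \<Rightarrow> ('a \<Rightarrow> complex mat) \<Rightarrow> 'a set \<Rightarrow> complex mat" where
  "msum D f S = mat D D (\<lambda>(a,b). \<Sum>x\<in>S. f x $$ (a,b))"

definition psd :: "nat \<Rightarrow> complex mat \<Rightarrow> bool" where
  "psd D A \<longleftrightarrow> A \<in> carrier_mat D D \<and>
     (\<forall>x :: nat \<Rightarrow> complex. let q = (\<Sum>i<D. \<Sum>j<D. cnj (x i) * A $$ (i,j) * x j)
        in q \<in> \<real> \<and> 0 \<le> Re q)"

definition ptrace_last :: "nat \<Rightarrow> complex mat \<Rightarrow> complex mat" where
  "ptrace_last d M = mat (dim_row M div d) (dim_col M div d)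
     (\<lambda>(a,b). \<Sum>c<d. M $$ (a * d + c, b * d + c))"

text \<open>Single-qubit Paulis: 0 = I, 1 = X, 2 = Y, 3 = Z.\<close>
definition pauli1 :: "nat \<Rightarrow> complex mat" where
  "pauli1 p = (if p = 1 then mat 2 2 (\<lambda>(i,j). if i \<noteq> j then 1 else 0)
     else if p = 2 then mat 2 2 (\<lambda>(i,j). if i = 0 \<and> j = 1 then - \<i> else if i = 1 \<and> j = 0 then \<i> else 0)
     else if p = 3 then mat 2 2 (\<lambda>(i,j). if i = j then (if i = 0 then 1 else -1) else 0)
     else 1\<^sub>m 2)"

definition pauli :: "nat list \<Rightarrow> complex mat" where
  "pauli ps = kron_list (map pauli1 ps)"

definition paulis :: "nat \<Rightarrow> nat list set" where
  "paulis n = {ps. length ps = n \<and> set ps \<subseteq> {..<4}}"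

definition trajectories :: "nat \<Rightarrow> nat \<Rightarrow> nat list list set" where
  "trajectories n k = {Ps. length Ps = Suc k \<and> set Ps \<subseteq> paulis n}"

text \<open>Vectorisation |P>> = (I (x) P) sum_i |i>|i>, entry at index i*d+j is P_(j,i).\<close>
definition vecP :: "complex mat \<Rightarrow> complex vec" where
  "vecP P = vec (dim_row P * dim_row P) (\<lambda>a. P $$ (a mod dim_row P, a div dim_row P))"

definition PiP :: "complex mat \<Rightarrow> complex mat" where
  "PiP P = (let v = vecP P; D = dim_vec v in mat D D (\<lambda>(a,b). v $ a * cnj (v $ b)))"

text \<open>Choi operator of a CPTP channel on a d-dimensional system (ordering H_i (x) H_o).\<close>
definition cptp_choi :: "nat \<Rightarrow> complex mat \<Rightarrow> bool" where
  "cptp_choi d C \<longleftrightarrow> psd (d * d) C \<and> ptrace_last d C = 1\<^sub>m d"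

text \<open>Valid k-slot process tensor on n qubits; slot order i_0,o_0,...,i_k,o_k.\<close>
definition process_tensor :: "nat \<Rightarrow> nat \<Rightarrow> complex mat \<Rightarrow> bool" where
  "process_tensor n k Ups \<longleftrightarrow> (let d = 2 ^ n in
     psd (d ^ (2 * Suc k)) Ups \<and>
     (\<exists>U :: nat \<Rightarrow> complex mat. U k = Ups \<and>
        (\<forall>j\<le>k. U j \<in> carrier_mat (d ^ (2 * Suc j)) (d ^ (2 * Suc j))) \<and>
        ptrace_last d (U 0) = 1\<^sub>m d \<and>
        (\<forall>j\<in>{1..k}. ptrace_last d (U j) = kron (U (j - 1)) (1\<^sub>m d))))"

definition pauli_twirl :: "nat \<Rightarrow> nat \<Rightarrow> complex mat \<Rightarrow> complex mat" where
  "pauli_twirl n k Ups =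
     msum (dim_row Ups)
       (\<lambda>Ps. (1 / of_nat (4 ^ n) ^ Suc k) \<cdot>\<^sub>m
          (let W = kron_list (map (\<lambda>p. kron (pauli p) (pauli p)) Ps) in W * Ups * W))
       (trajectories n k)"

definition mtrace :: "complex mat \<Rightarrow> complex" where
  "mtrace A = (\<Sum>i<dim_row A. A $$ (i,i))"

definition traj_op :: "nat list list \<Rightarrow> complex mat" where
  "traj_op Ps = kron_list (map (\<lambda>p. PiP (pauli p)) Ps)"

definition traj_weight :: "complex mat \<Rightarrow> nat list list \<Rightarrow> complex" where
  "traj_weight Ups Ps = mtrace (traj_op Ps * Ups)"

definition traj_norm :: "nat \<Rightarrow> nat \<Rightarrow> complex mat \<Rightarrow> complex" where
  "traj_norm n k Ups = (\<Sum>Ps\<in>trajectories n k. traj_weight Ups Ps)"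

definition traj_prob :: "nat \<Rightarrow> nat \<Rightarrow> complex mat \<Rightarrow> nat list list \<Rightarrow> complex" where
  "traj_prob n k Ups Ps = traj_weight Ups Ps / traj_norm n k Ups"

definition process_separable :: "nat \<Rightarrow> nat \<Rightarrow> complex mat \<Rightarrow> bool" where
  "process_separable d k M \<longleftrightarrow>
     (\<exists>(I :: nat set) (p :: nat \<Rightarrow> real) (C :: nat \<Rightarrow> complex mat list).
        finite I \<and> (\<forall>i\<in>I. 0 \<le> p i) \<and> (\<Sum>i\<in>I. p i) = 1 \<and>
        (\<forall>i\<in>I. length (C i) = Suc k \<and> (\<forall>c\<in>set (C i). cptp_choi d c)) \<and>
        M = msum (dim_row M) (\<lambda>i. complex_of_real (p i) \<cdot>\<^sub>m kron_list (C i)) I)"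

end

theory Submission
  imports Defs
begin

text \<open>For a single time step,
  \<open>\<Sum>\<^sub>P (P \<otimes> P) X (P \<otimes> P) = \<Sum>\<^sub>P \<langle>\<langle>P|X|P\<rangle>\<rangle> \<Pi>\<^sub>P\<close>.
  Written entrywise, both sides are sums of products of matrix entries, and such sums factorise
  over Kronecker products; so the identity reduces to a finite check on single-qubit Paulis and
  then lifts to n qubits and to k + 1 time steps.  Hence the twirled process tensor is
  \<open>4^(-n(k+1)) \<Sum> w(\<P>) \<Upsilon>\<^sub>\<P>\<close>.  Each \<open>\<Upsilon>\<^sub>\<P>\<close> is rank-one positive, so
  \<open>w(\<P>) \<ge> 0\<close>.  By completeness of the Pauli basis \<open>\<Sum> \<Upsilon>\<^sub>\<P> = 2^(n(k+1)) \<I>\<close>, and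
  the causality conditions force \<open>Tr \<Upsilon> = 2^(n(k+1))\<close>, so the weights sum to exactly
  \<open>4^(n(k+1))\<close>.  Finally \<open>\<Pi>\<^sub>P\<close> is the Choi operator of the unitary channel
  \<open>\<rho> \<mapsto> P \<rho> P\<close>, which makes the decomposition process-separable.\<close>

abbreviation lists_of_length :: "nat \<Rightarrow> 'a set \<Rightarrow> 'a list set" where
  "lists_of_length L S \<equiv> {xs. length xs = L \<and> set xs \<subseteq> S}"

lemma finite_lists_of_length: "finite S \<Longrightarrow> finite (lists_of_length L S)"
  using finite_lists_length_eq[of S L] by (simp add: conj_commute)

lemma lists_of_length_singleton: "lists_of_length L {x} = {replicate L x}"
  by (auto intro: replicate_length_same[symmetric])

lemma sum_lists_of_length_Suc:
  assumes "finite S"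
  shows "(\<Sum>xs\<in>lists_of_length (Suc L) S. g xs) = (\<Sum>x\<in>S. \<Sum>xs\<in>lists_of_length L S. g (x # xs))"
proof -
  have image: "lists_of_length (Suc L) S = (\<lambda>(x, xs). x # xs) ` (S \<times> lists_of_length L S)"
    by (auto simp: length_Suc_conv image_iff)
  have inj: "inj_on (\<lambda>(x, xs). x # xs) (S \<times> lists_of_length L S)"
    by (auto simp: inj_on_def)
  show ?thesis
    unfolding image sum.reindex[OF inj] by (simp add: sum.cartesian_product split_def)
qed

lemma mult_add_less_mult:
  assumes "a < q" "b < (d::nat)"
  shows "a * d + b < q * d"
proof -
  have "a * d + b < Suc a * d" using assms(2) by simp
  also have "\<dots> \<le> q * d" using assms(1) by (intro mult_le_mono1) simp
  finally show ?thesis .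
qed

lemma mod_less_of_less_mult: "i < m * p \<Longrightarrow> i mod p < (p::nat)"
  by (cases "p = 0") auto

lemma div_mod_eq_iff: "(i div p = j div p \<and> i mod p = j mod p) \<longleftrightarrow> i = (j::nat)"
  by (metis div_mult_mod_eq)

lemma sum_lessThan_mult:
  fixes f :: "nat \<Rightarrow> 'a::comm_monoid_add"
  shows "(\<Sum>i<q * d. f i) = (\<Sum>a<q. \<Sum>c<d. f (a * d + c))"
proof -
  have "(\<Sum>i<q * d. f i) = (\<Sum>a<q. sum f {a * d..<a * d + d})"
    using sum.nat_group[of f d q] by simp
  also have "\<dots> = (\<Sum>a<q. \<Sum>c<d. f (a * d + c))"
    using sum.shift_bounds_nat_ivl[of f 0 "_ * d" d] by (simp add: lessThan_atLeast0 add.commute)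
  finally show ?thesis .
qed

section \<open>Kronecker products\<close>

lemma kron_carrier:
  "A \<in> carrier_mat m m \<Longrightarrow> B \<in> carrier_mat p p \<Longrightarrow> kron A B \<in> carrier_mat (m * p) (m * p)"
  unfolding kron_def by (intro carrier_matI) auto

lemma kron_index:
  assumes "A \<in> carrier_mat m m" "B \<in> carrier_mat p p" "i < m * p" "j < m * p"
  shows "kron A B $$ (i, j) = A $$ (i div p, j div p) * B $$ (i mod p, j mod p)"
  using assms unfolding kron_def by auto

lemma kron_list_Nil: "kron_list [] = 1\<^sub>m 1"
  by (simp add: kron_list_def)

lemma kron_list_Cons: "kron_list (A # As) = kron A (kron_list As)"
  by (simp add: kron_list_def)

lemma kron_list_carrier:
  "\<forall>A\<in>set As. A \<in> carrier_mat m m \<Longrightarrow> kron_list As \<in> carrier_mat (m ^ length As) (m ^ length As)"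
  by (induction As) (auto simp: kron_list_Nil kron_list_Cons intro: kron_carrier)

lemma kron_one: "kron (1\<^sub>m a) (1\<^sub>m b) = 1\<^sub>m (a * b)"
proof (rule eq_matI)
  fix i j assume "i < dim_row (1\<^sub>m (a * b))" "j < dim_col (1\<^sub>m (a * b))"
  then have ij: "i < a * b" "j < a * b" by auto
  then have "i div b < a" "j div b < a" "i mod b < b" "j mod b < b"
    by (auto intro: less_mult_imp_div_less mod_less_of_less_mult)
  then show "kron (1\<^sub>m a) (1\<^sub>m b) $$ (i, j) = 1\<^sub>m (a * b) $$ (i, j)"
    using ij div_mod_eq_iff[of i b j] by (auto simp: kron_index[of _ a _ b])
qed (auto simp: kron_def)

lemma kron_list_replicate_one: "kron_list (replicate L (1\<^sub>m b)) = 1\<^sub>m (b ^ L)"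
  by (induction L) (auto simp: kron_list_Nil kron_list_Cons kron_one)

section \<open>Sums of entry monomials over Kronecker products\<close>

text \<open>A factor (c, r, s) of an entry monomial stands for the entry at (idx r, idx s),
  conjugated if c.  Entry monomials are multiplicative under Kronecker products, which lets
  identities between sums of them lift from single factors to Kronecker products.\<close>

definition entry_monomial :: "complex mat \<Rightarrow> (bool \<times> nat \<times> nat) list \<Rightarrow> (nat \<Rightarrow> nat) \<Rightarrow> complex" where
  "entry_monomial A ms idx =
     prod_list (map (\<lambda>(c, r, s). if c then cnj (A $$ (idx r, idx s)) else A $$ (idx r, idx s)) ms)"

definition monomial_in_range :: "nat \<Rightarrow> (bool \<times> nat \<times> nat) list \<Rightarrow> (nat \<Rightarrow> nat) \<Rightarrow> bool" where
  "monomial_in_range m ms idx \<longleftrightarrow> (\<forall>(_, r, s)\<in>set ms. idx r < m \<and> idx s < m)"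

lemma entry_monomial_Nil [simp]: "entry_monomial A [] idx = 1"
  by (simp add: entry_monomial_def)

lemma entry_monomial_Cons [simp]:
  "entry_monomial A ((c, r, s) # ms) idx =
     (if c then cnj (A $$ (idx r, idx s)) else A $$ (idx r, idx s)) * entry_monomial A ms idx"
  by (simp add: entry_monomial_def)

lemma entry_monomial_kron:
  assumes "A \<in> carrier_mat m m" "B \<in> carrier_mat p p" "monomial_in_range (m * p) ms idx"
  shows "entry_monomial (kron A B) ms idx
    = entry_monomial A ms (\<lambda>i. idx i div p) * entry_monomial B ms (\<lambda>i. idx i mod p)"
  using assms(3)
proof (induction ms)
  case (Cons f ms)
  obtain c r s where f: "f = (c, r, s)" by (cases f)
  with Cons.prems have "monomial_in_range (m * p) ms idx" "idx r < m * p" "idx s < m * p"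
    by (auto simp: monomial_in_range_def)
  with Cons.IH show ?case by (simp add: f kron_index[OF assms(1,2)])
qed simp

lemma monomial_in_range_div:
  "monomial_in_range (m * p) ms idx \<Longrightarrow> monomial_in_range m ms (\<lambda>i. idx i div p)"
  by (auto simp: monomial_in_range_def intro: less_mult_imp_div_less)

lemma monomial_in_range_mod:
  "monomial_in_range (m * p) ms idx \<Longrightarrow> 0 < p \<Longrightarrow> monomial_in_range p ms (\<lambda>i. idx i mod p)"
  by (auto simp: monomial_in_range_def)

lemma entry_monomial_one_1: "monomial_in_range 1 ms idx \<Longrightarrow> entry_monomial (1\<^sub>m 1) ms idx = 1"
  by (induction ms) (auto simp: monomial_in_range_def)

lemma entry_monomial_kron_list_Cons:
  assumes "\<forall>y\<in>set (x # xs). H y \<in> carrier_mat m m" "length xs = L"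
    and "monomial_in_range (m * m ^ L) ms idx"
  shows "entry_monomial (kron_list (map H (x # xs))) ms idx
    = entry_monomial (H x) ms (\<lambda>i. idx i div m ^ L)
      * entry_monomial (kron_list (map H xs)) ms (\<lambda>i. idx i mod m ^ L)"
proof -
  have "kron_list (map H xs) \<in> carrier_mat (m ^ L) (m ^ L)"
    using assms kron_list_carrier[of "map H xs" m] by auto
  moreover have "H x \<in> carrier_mat m m"
    using assms(1) by simp
  ultimately show ?thesis
    using assms(3) by (simp add: kron_list_Cons entry_monomial_kron)
qed

lemma sum_entry_monomial_kron_list:
  assumes "finite S" "finite T" "0 < m"
    and F: "\<forall>x\<in>S. F x \<in> carrier_mat m m" and G: "\<forall>y\<in>T. G y \<in> carrier_mat m m"
    and factor: "\<And>idx. monomial_in_range m ms idx \<Longrightarrow> monomial_in_range m ms' idx \<Longrightarrow>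
        (\<Sum>x\<in>S. entry_monomial (F x) ms idx) = c * (\<Sum>y\<in>T. entry_monomial (G y) ms' idx)"
    and "monomial_in_range (m ^ L) ms idx" "monomial_in_range (m ^ L) ms' idx"
  shows "(\<Sum>xs\<in>lists_of_length L S. entry_monomial (kron_list (map F xs)) ms idx)
     = c ^ L * (\<Sum>ys\<in>lists_of_length L T. entry_monomial (kron_list (map G ys)) ms' idx)"
  using assms(7,8)
proof (induction L arbitrary: idx)
  case 0
  have empty: "lists_of_length 0 S = {[]}" "lists_of_length 0 T = {[]}" by auto
  show ?case
    using 0 entry_monomial_one_1[of ms idx] entry_monomial_one_1[of ms' idx]
    unfolding empty by (simp add: kron_list_Nil)
next
  case (Suc L)
  let ?M = "m ^ L" and ?hi = "\<lambda>i. idx i div m ^ L" and ?lo = "\<lambda>i. idx i mod m ^ L"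
  have range: "monomial_in_range (m * ?M) ms idx" "monomial_in_range (m * ?M) ms' idx"
    using Suc.prems by simp_all
  have "?M > 0" using \<open>0 < m\<close> by simp
  note IH = Suc.IH[OF monomial_in_range_mod[OF range(1) this] monomial_in_range_mod[OF range(2) this]]
  note factor = factor[OF monomial_in_range_div[OF range(1)] monomial_in_range_div[OF range(2)]]
  have "(\<Sum>xs\<in>lists_of_length (Suc L) S. entry_monomial (kron_list (map F xs)) ms idx)
      = (\<Sum>x\<in>S. \<Sum>xs\<in>lists_of_length L S.
          entry_monomial (F x) ms ?hi * entry_monomial (kron_list (map F xs)) ms ?lo)"
    unfolding sum_lists_of_length_Suc[OF \<open>finite S\<close>]
    using F range(1) by (intro sum.cong refl entry_monomial_kron_list_Cons) auto
  also have "\<dots> = c ^ Suc L * ((\<Sum>y\<in>T. entry_monomial (G y) ms' ?hi)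
        * (\<Sum>ys\<in>lists_of_length L T. entry_monomial (kron_list (map G ys)) ms' ?lo))"
    by (simp add: sum_product[symmetric] factor IH)
  also have "\<dots> = c ^ Suc L * (\<Sum>y\<in>T. \<Sum>ys\<in>lists_of_length L T.
          entry_monomial (G y) ms' ?hi * entry_monomial (kron_list (map G ys)) ms' ?lo)"
    by (simp add: sum_product)
  also have "\<dots> = c ^ Suc L *
      (\<Sum>ys\<in>lists_of_length (Suc L) T. entry_monomial (kron_list (map G ys)) ms' idx)"
    unfolding sum_lists_of_length_Suc[OF \<open>finite T\<close>]
    using G range(2)
    by (intro arg_cong[where f = "(*) _"] sum.cong refl entry_monomial_kron_list_Cons[symmetric]) auto
  finally show ?case .
qed

section \<open>Pauli operators\<close>

lemma pauli1_carrier: "pauli1 p \<in> carrier_mat 2 2"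
  by (simp add: pauli1_def)

lemma pauli1_entries:
  "pauli1 0 $$ (0, 0) = 1" "pauli1 0 $$ (0, Suc 0) = 0"
  "pauli1 0 $$ (Suc 0, 0) = 0" "pauli1 0 $$ (Suc 0, Suc 0) = 1"
  "pauli1 (Suc 0) $$ (0, 0) = 0" "pauli1 (Suc 0) $$ (0, Suc 0) = 1"
  "pauli1 (Suc 0) $$ (Suc 0, 0) = 1" "pauli1 (Suc 0) $$ (Suc 0, Suc 0) = 0"
  "pauli1 2 $$ (0, 0) = 0" "pauli1 2 $$ (0, Suc 0) = - \<i>"
  "pauli1 2 $$ (Suc 0, 0) = \<i>" "pauli1 2 $$ (Suc 0, Suc 0) = 0"
  "pauli1 3 $$ (0, 0) = 1" "pauli1 3 $$ (0, Suc 0) = 0"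
  "pauli1 3 $$ (Suc 0, 0) = 0" "pauli1 3 $$ (Suc 0, Suc 0) = -1"
  by (simp_all add: pauli1_def)

lemma lessThan_four: "{..<4::nat} = {0, 1, 2, 3}"
  by auto

lemma less_two_iff: "x < 2 \<longleftrightarrow> x \<in> {0, 1::nat}"
  by auto

lemma sum_pauli1_entries_fierz:
  assumes "a < 2" "a' < 2" "c < 2" "c' < 2" "e < 2" "e' < 2" "b < 2" "b' < 2"
  shows "(\<Sum>p<4. pauli1 p $$ (a, c) * pauli1 p $$ (a', c') * pauli1 p $$ (e, b) * pauli1 p $$ (e', b'))
    = (\<Sum>p<4. pauli1 p $$ (e', e) * cnj (pauli1 p $$ (c', c))
              * pauli1 p $$ (a', a) * cnj (pauli1 p $$ (b', b)))"
proof -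
  have "\<forall>a\<in>{0,1}. \<forall>a'\<in>{0,1}. \<forall>c\<in>{0,1}. \<forall>c'\<in>{0,1}. \<forall>e\<in>{0,1}. \<forall>e'\<in>{0,1}. \<forall>b\<in>{0,1}. \<forall>b'\<in>{0,1::nat}.
    (\<Sum>p<4. pauli1 p $$ (a, c) * pauli1 p $$ (a', c') * pauli1 p $$ (e, b) * pauli1 p $$ (e', b'))
    = (\<Sum>p<4. pauli1 p $$ (e', e) * cnj (pauli1 p $$ (c', c))
              * pauli1 p $$ (a', a) * cnj (pauli1 p $$ (b', b)))"
    by (simp add: lessThan_four pauli1_entries)
  then show ?thesis
    using assms unfolding less_two_iff by blast
qed

lemma sum_pauli1_entries_completeness:
  assumes "a < 2" "b < 2" "c < 2" "e < 2"
  shows "(\<Sum>p<4. pauli1 p $$ (a, b) * cnj (pauli1 p $$ (c, e))) = (if a = c \<and> b = e then 2 else 0)"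
proof -
  have "\<forall>a\<in>{0,1}. \<forall>b\<in>{0,1}. \<forall>c\<in>{0,1}. \<forall>e\<in>{0,1::nat}.
    (\<Sum>p<4. pauli1 p $$ (a, b) * cnj (pauli1 p $$ (c, e))) = (if a = c \<and> b = e then 2 else 0)"
    by (simp add: lessThan_four pauli1_entries)
  then show ?thesis
    using assms unfolding less_two_iff by blast
qed

lemma pauli_carrier: "ps \<in> paulis n \<Longrightarrow> pauli ps \<in> carrier_mat (2 ^ n) (2 ^ n)"
  unfolding paulis_def pauli_def using kron_list_carrier[of "map pauli1 ps" 2] pauli1_carrier by auto

lemma finite_paulis: "finite (paulis n)"
  unfolding paulis_def by (simp add: finite_lists_of_length)

lemma sum_pauli_entries_fierz:
  assumes "a < 2^n" "a' < 2^n" "c < 2^n" "c' < 2^n" "e < 2^n" "e' < 2^n" "b < 2^n" "b' < 2^n"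
  shows "(\<Sum>ps\<in>paulis n. pauli ps $$ (a, c) * pauli ps $$ (a', c')
                      * pauli ps $$ (e, b) * pauli ps $$ (e', b'))
    = (\<Sum>ps\<in>paulis n. pauli ps $$ (e', e) * cnj (pauli ps $$ (c', c))
                      * pauli ps $$ (a', a) * cnj (pauli ps $$ (b', b)))"
proof -
  let ?ms = "[(False, 0, 2), (False, 1, 3), (False, 4, 6), (False, 5, 7)]"
  let ?ms' = "[(False, 5, 4), (True, 3, 2), (False, 1, 0), (True, 7, 6)]"
  let ?idx = "\<lambda>i. [a, a', c, c', e, e', b, b'] ! i"
  have "(\<Sum>p<4. entry_monomial (pauli1 p) ?ms idx)
      = 1 * (\<Sum>p<4. entry_monomial (pauli1 p) ?ms' idx)"
    if "monomial_in_range 2 ?ms idx" "monomial_in_range 2 ?ms' idx" for idx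
    using that
      sum_pauli1_entries_fierz[of "idx 0" "idx 1" "idx 2" "idx 3" "idx 4" "idx 5" "idx 6" "idx 7"]
    by (simp add: monomial_in_range_def mult.assoc)
  from sum_entry_monomial_kron_list[OF finite_lessThan finite_lessThan _ _ _ this,
      where m = 2 and L = n and idx = ?idx]
  show ?thesis
    using assms pauli1_carrier
    by (simp add: paulis_def pauli_def monomial_in_range_def mult.assoc)
qed

lemma sum_pauli_entries_completeness:
  assumes "a < 2^n" "b < 2^n" "c < 2^n" "e < 2^n"
  shows "(\<Sum>ps\<in>paulis n. pauli ps $$ (a, b) * cnj (pauli ps $$ (c, e)))
    = (if a = c \<and> b = e then 2 ^ n else 0)"
proof -
  let ?ms = "[(False, 0, 1), (True, 2, 3)]" and ?ms' = "[(False, 0, 2), (False, 1, 3)]"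
  let ?idx = "\<lambda>i. [a, b, c, e] ! i"
  have "(\<Sum>p<4. entry_monomial (pauli1 p) ?ms idx) = 2 * (\<Sum>_\<in>{()}. entry_monomial (1\<^sub>m 2) ?ms' idx)"
    if "monomial_in_range 2 ?ms idx" "monomial_in_range 2 ?ms' idx" for idx
    using that sum_pauli1_entries_completeness[of "idx 0" "idx 1" "idx 2" "idx 3"]
    by (simp add: monomial_in_range_def)
  from sum_entry_monomial_kron_list[OF finite_lessThan finite.insertI[OF finite.emptyI] _ _ _ this,
      where m = 2 and L = n and idx = ?idx]
  show ?thesis
    using assms pauli1_carrier
    by (simp add: paulis_def pauli_def monomial_in_range_def lists_of_length_singleton
        kron_list_replicate_one)
qed

definition unitary_mat :: "nat \<Rightarrow> complex mat \<Rightarrow> bool" where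
  "unitary_mat m A \<longleftrightarrow> A \<in> carrier_mat m m \<and>
     (\<forall>a<m. \<forall>b<m. (\<Sum>c<m. A $$ (c, a) * cnj (A $$ (c, b))) = (if a = b then 1 else 0))"

lemma unitary_mat_kron:
  assumes A: "unitary_mat m A" and B: "unitary_mat p B"
  shows "unitary_mat (m * p) (kron A B)"
proof -
  have cA: "A \<in> carrier_mat m m" and cB: "B \<in> carrier_mat p p"
    using A B by (auto simp: unitary_mat_def)
  have "(\<Sum>c<m * p. kron A B $$ (c, a) * cnj (kron A B $$ (c, b))) = (if a = b then 1 else 0)"
    if ab: "a < m * p" "b < m * p" for a b
  proof -
    have ab_div: "a div p < m" "b div p < m" and ab_mod: "a mod p < p" "b mod p < p"
      using ab by (auto intro: less_mult_imp_div_less mod_less_of_less_mult)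
    have "(\<Sum>c<m * p. kron A B $$ (c, a) * cnj (kron A B $$ (c, b)))
       = (\<Sum>c<m. \<Sum>c'<p. (A $$ (c, a div p) * cnj (A $$ (c, b div p)))
                          * (B $$ (c', a mod p) * cnj (B $$ (c', b mod p))))"
      unfolding sum_lessThan_mult
      using ab mult_add_less_mult by (intro sum.cong refl) (auto simp: kron_index[OF cA cB] mult_ac)
    also have "\<dots> = (\<Sum>c<m. A $$ (c, a div p) * cnj (A $$ (c, b div p)))
                    * (\<Sum>c'<p. B $$ (c', a mod p) * cnj (B $$ (c', b mod p)))"
      by (simp add: sum_product)
    also have "\<dots> = (if a = b then 1 else 0)"
      using A B ab_div ab_mod div_mod_eq_iff[of a p b] by (auto simp: unitary_mat_def)
    finally show ?thesis .
  qed
  then show ?thesis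
    using kron_carrier[OF cA cB] by (simp add: unitary_mat_def)
qed

lemma unitary_mat_pauli1: "unitary_mat 2 (pauli1 p)"
  by (auto simp: unitary_mat_def pauli1_def numeral_2_eq_2 lessThan_Suc less_Suc_eq)

lemma unitary_mat_pauli: "unitary_mat (2 ^ length ps) (pauli ps)"
proof (induction ps)
  case Nil
  show ?case by (simp add: pauli_def kron_list_Nil unitary_mat_def)
next
  case (Cons p ps)
  from unitary_mat_kron[OF unitary_mat_pauli1 this] show ?case
    by (simp add: pauli_def kron_list_Cons)
qed

section \<open>The twirl identity for trajectories\<close>

lemma PiP_carrier: "P \<in> carrier_mat d d \<Longrightarrow> PiP P \<in> carrier_mat (d * d) (d * d)"
  unfolding PiP_def vecP_def Let_def by (intro carrier_matI) auto

lemma PiP_index: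
  assumes "P \<in> carrier_mat d d" "i < d * d" "j < d * d"
  shows "PiP P $$ (i, j) = P $$ (i mod d, i div d) * cnj (P $$ (j mod d, j div d))"
  using assms unfolding PiP_def vecP_def Let_def by auto

text \<open>Entrywise form of the single-step twirl identity
  \<open>\<Sum>\<^sub>P (P \<otimes> P) X (P \<otimes> P) = \<Sum>\<^sub>P \<langle>\<langle>P|X|P\<rangle>\<rangle> \<Pi>\<^sub>P\<close>.\<close>

lemma sum_kron_pauli_entries_fierz:
  assumes "a < 2^n * 2^n" "b < 2^n * 2^n" "c < 2^n * 2^n" "e < 2^n * 2^n"
  shows "(\<Sum>ps\<in>paulis n. kron (pauli ps) (pauli ps) $$ (a, c) * kron (pauli ps) (pauli ps) $$ (e, b))
    = (\<Sum>ps\<in>paulis n. PiP (pauli ps) $$ (e, c) * PiP (pauli ps) $$ (a, b))"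
proof -
  let ?d = "2^n :: nat"
  have lt: "x div ?d < ?d" "x mod ?d < ?d" if "x < ?d * ?d" for x
    using that by (auto intro: less_mult_imp_div_less mod_less_of_less_mult)
  have "(\<Sum>ps\<in>paulis n. kron (pauli ps) (pauli ps) $$ (a, c) * kron (pauli ps) (pauli ps) $$ (e, b))
     = (\<Sum>ps\<in>paulis n. pauli ps $$ (a div ?d, c div ?d) * pauli ps $$ (a mod ?d, c mod ?d)
          * pauli ps $$ (e div ?d, b div ?d) * pauli ps $$ (e mod ?d, b mod ?d))"
    using assms by (intro sum.cong refl) (simp add: kron_index[OF pauli_carrier pauli_carrier] mult.assoc)
  also have "\<dots> = (\<Sum>ps\<in>paulis n. pauli ps $$ (e mod ?d, e div ?d) * cnj (pauli ps $$ (c mod ?d, c div ?d))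
          * pauli ps $$ (a mod ?d, a div ?d) * cnj (pauli ps $$ (b mod ?d, b div ?d)))"
    using assms by (intro sum_pauli_entries_fierz lt)
  also have "\<dots> = (\<Sum>ps\<in>paulis n. PiP (pauli ps) $$ (e, c) * PiP (pauli ps) $$ (a, b))"
    using assms by (intro sum.cong refl) (simp add: PiP_index[OF pauli_carrier] mult.assoc)
  finally show ?thesis .
qed

lemma sum_PiP_pauli_entries:
  assumes "i < 2^n * 2^n" "j < 2^n * 2^n"
  shows "(\<Sum>ps\<in>paulis n. PiP (pauli ps) $$ (i, j)) = (if i = j then 2 ^ n else 0)"
proof -
  let ?d = "2^n :: nat"
  have lt: "x div ?d < ?d" "x mod ?d < ?d" if "x < ?d * ?d" for x
    using that by (auto intro: less_mult_imp_div_less mod_less_of_less_mult)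
  have "(\<Sum>ps\<in>paulis n. PiP (pauli ps) $$ (i, j))
     = (\<Sum>ps\<in>paulis n. pauli ps $$ (i mod ?d, i div ?d) * cnj (pauli ps $$ (j mod ?d, j div ?d)))"
    using assms by (intro sum.cong refl) (simp add: PiP_index[OF pauli_carrier])
  also have "\<dots> = (if i = j then 2 ^ n else 0)"
    using assms lt div_mod_eq_iff[of i ?d j] by (auto simp: sum_pauli_entries_completeness)
  finally show ?thesis .
qed

definition twirl_op :: "nat list list \<Rightarrow> complex mat" where
  "twirl_op Ps = kron_list (map (\<lambda>ps. kron (pauli ps) (pauli ps)) Ps)"

lemma twirl_op_carrier:
  "Ps \<in> lists_of_length L (paulis n) \<Longrightarrow> twirl_op Ps \<in> carrier_mat ((2^n * 2^n) ^ L) ((2^n * 2^n) ^ L)"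
  unfolding twirl_op_def
  using kron_list_carrier[of "map (\<lambda>ps. kron (pauli ps) (pauli ps)) Ps" "2^n * 2^n"]
  by (auto intro: kron_carrier pauli_carrier)

lemma traj_op_carrier:
  "Ps \<in> lists_of_length L (paulis n) \<Longrightarrow> traj_op Ps \<in> carrier_mat ((2^n * 2^n) ^ L) ((2^n * 2^n) ^ L)"
  unfolding traj_op_def
  using kron_list_carrier[of "map (\<lambda>ps. PiP (pauli ps)) Ps" "2^n * 2^n"]
  by (auto intro: PiP_carrier pauli_carrier)

lemma sum_twirl_op_entries_fierz:
  assumes "a < (2^n * 2^n) ^ L" "b < (2^n * 2^n) ^ L" "c < (2^n * 2^n) ^ L" "e < (2^n * 2^n) ^ L"
  shows "(\<Sum>Ps\<in>lists_of_length L (paulis n). twirl_op Ps $$ (a, c) * twirl_op Ps $$ (e, b))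
    = (\<Sum>Ps\<in>lists_of_length L (paulis n). traj_op Ps $$ (e, c) * traj_op Ps $$ (a, b))"
proof -
  let ?m = "2^n * 2^n :: nat"
  let ?ms = "[(False, 0, 2), (False, 3, 1)]" and ?ms' = "[(False, 3, 2), (False, 0, 1)]"
  let ?idx = "\<lambda>i. [a, b, c, e] ! i"
  have "(\<Sum>ps\<in>paulis n. entry_monomial (kron (pauli ps) (pauli ps)) ?ms idx)
      = 1 * (\<Sum>ps\<in>paulis n. entry_monomial (PiP (pauli ps)) ?ms' idx)"
    if "monomial_in_range ?m ?ms idx" "monomial_in_range ?m ?ms' idx" for idx
    using that sum_kron_pauli_entries_fierz[of "idx 0" n "idx 1" "idx 2" "idx 3"]
    by (simp add: monomial_in_range_def)
  from sum_entry_monomial_kron_list[OF finite_paulis finite_paulis _ _ _ this,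
      where m = ?m and L = L and idx = ?idx]
  show ?thesis
    using assms by (simp add: twirl_op_def traj_op_def monomial_in_range_def
        kron_carrier pauli_carrier PiP_carrier)
qed

lemma sum_traj_op_entries:
  assumes "i < (2^n * 2^n) ^ L" "j < (2^n * 2^n) ^ L"
  shows "(\<Sum>Ps\<in>lists_of_length L (paulis n). traj_op Ps $$ (i, j)) = (if i = j then (2 ^ n) ^ L else 0)"
proof -
  let ?m = "2^n * 2^n :: nat"
  let ?ms = "[(False, 0, 1)]"
  let ?idx = "\<lambda>x. [i, j] ! x"
  have "(\<Sum>ps\<in>paulis n. entry_monomial (PiP (pauli ps)) ?ms idx)
      = 2 ^ n * (\<Sum>_\<in>{()}. entry_monomial (1\<^sub>m ?m) ?ms idx)"
    if "monomial_in_range ?m ?ms idx" "monomial_in_range ?m ?ms idx" for idx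
    using that sum_PiP_pauli_entries[of "idx 0" n "idx 1"] by (simp add: monomial_in_range_def)
  from sum_entry_monomial_kron_list[OF finite_paulis finite.insertI[OF finite.emptyI] _ _ _ this,
      where m = ?m and L = L and idx = ?idx]
  show ?thesis
    using assms by (simp add: traj_op_def monomial_in_range_def PiP_carrier pauli_carrier
        lists_of_length_singleton kron_list_replicate_one power_mult_distrib)
qed

section \<open>Positivity, Choi operators and traces\<close>

definition ketbra :: "nat \<Rightarrow> complex mat \<Rightarrow> bool" where
  "ketbra m A \<longleftrightarrow> A \<in> carrier_mat m m \<and> (\<exists>v. \<forall>i<m. \<forall>j<m. A $$ (i, j) = v i * cnj (v j))"

lemma ketbra_kron:
  assumes "ketbra m A" "ketbra p B"
  shows "ketbra (m * p) (kron A B)"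
proof -
  obtain v w where cA: "A \<in> carrier_mat m m" and cB: "B \<in> carrier_mat p p"
    and v: "\<forall>i<m. \<forall>j<m. A $$ (i, j) = v i * cnj (v j)"
    and w: "\<forall>i<p. \<forall>j<p. B $$ (i, j) = w i * cnj (w j)"
    using assms unfolding ketbra_def by blast
  have "kron A B $$ (i, j) = (v (i div p) * w (i mod p)) * cnj (v (j div p) * w (j mod p))"
    if "i < m * p" "j < m * p" for i j
    using that v w by (simp add: kron_index[OF cA cB] less_mult_imp_div_less mod_less_of_less_mult)
  then show ?thesis
    using kron_carrier[OF cA cB] unfolding ketbra_def
    by (intro conjI exI[of _ "\<lambda>i. v (i div p) * w (i mod p)"] allI impI)
qed

lemma ketbra_PiP: "P \<in> carrier_mat d d \<Longrightarrow> ketbra (d * d) (PiP P)"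
  unfolding ketbra_def
  by (intro conjI PiP_carrier exI[of _ "\<lambda>i. P $$ (i mod d, i div d)"] allI impI PiP_index)

lemma ketbra_traj_op: "set Ps \<subseteq> paulis n \<Longrightarrow> ketbra ((2^n * 2^n) ^ length Ps) (traj_op Ps)"
proof (induction Ps)
  case Nil
  show ?case by (auto simp: traj_op_def kron_list_Nil ketbra_def intro!: exI[of _ "\<lambda>_. 1"])
next
  case (Cons ps Ps)
  then have "ketbra (2^n * 2^n) (PiP (pauli ps))"
    by (simp add: ketbra_PiP pauli_carrier)
  from ketbra_kron[OF this] Cons show ?case
    by (simp add: traj_op_def kron_list_Cons)
qed

lemma psd_ketbra:
  assumes "ketbra m A"
  shows "psd m A"
proof -
  obtain v where cA: "A \<in> carrier_mat m m" and v: "\<forall>i<m. \<forall>j<m. A $$ (i, j) = v i * cnj (v j)"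
    using assms unfolding ketbra_def by blast
  have "(\<Sum>i<m. \<Sum>j<m. cnj (x i) * A $$ (i, j) * x j) = of_real (cmod (\<Sum>i<m. cnj (x i) * v i) ^ 2)"
    for x :: "nat \<Rightarrow> complex"
  proof -
    let ?s = "\<Sum>i<m. cnj (x i) * v i"
    have "(\<Sum>i<m. \<Sum>j<m. cnj (x i) * A $$ (i, j) * x j)
        = (\<Sum>i<m. \<Sum>j<m. (cnj (x i) * v i) * cnj (cnj (x j) * v j))"
      using v by (intro sum.cong refl) (simp add: mult_ac)
    also have "\<dots> = ?s * cnj ?s"
      by (simp add: sum_product[symmetric] cnj_sum)
    also have "\<dots> = of_real (cmod ?s ^ 2)"
      by (rule complex_norm_square[symmetric])
    finally show ?thesis .
  qed
  then show ?thesis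
    using cA unfolding psd_def Let_def by simp
qed

lemma psd_carrier: "psd D A \<Longrightarrow> A \<in> carrier_mat D D"
  by (simp add: psd_def)

lemma mtrace_mult:
  assumes "A \<in> carrier_mat D D" "B \<in> carrier_mat D D"
  shows "mtrace (A * B) = (\<Sum>i<D. \<Sum>j<D. A $$ (i, j) * B $$ (j, i))"
  using assms by (simp add: mtrace_def scalar_prod_def atLeast0LessThan)

lemma mtrace_ketbra_mult_psd_nonneg:
  assumes "ketbra D A" "psd D M"
  shows "mtrace (A * M) \<in> \<real> \<and> 0 \<le> Re (mtrace (A * M))"
proof -
  obtain v where cA: "A \<in> carrier_mat D D" and v: "\<forall>i<D. \<forall>j<D. A $$ (i, j) = v i * cnj (v j)"
    using assms unfolding ketbra_def by blast
  have "mtrace (A * M) = (\<Sum>i<D. \<Sum>j<D. cnj (v j) * M $$ (j, i) * v i)"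
    using v by (simp add: mtrace_mult[OF cA psd_carrier[OF assms(2)]] mult_ac)
  also have "\<dots> = (\<Sum>j<D. \<Sum>i<D. cnj (v j) * M $$ (j, i) * v i)"
    by (rule sum.swap)
  moreover have "let q = (\<Sum>j<D. \<Sum>i<D. cnj (v j) * M $$ (j, i) * v i) in q \<in> \<real> \<and> 0 \<le> Re q"
    using assms(2) unfolding psd_def by blast
  ultimately show ?thesis
    unfolding Let_def by simp
qed

lemma cptp_choi_PiP:
  assumes "unitary_mat d P"
  shows "cptp_choi d (PiP P)"
proof -
  have cP: "P \<in> carrier_mat d d" using assms by (simp add: unitary_mat_def)
  have "ptrace_last d (PiP P) $$ (a, b) = 1\<^sub>m d $$ (a, b)" if "a < d" "b < d" for a b
  proof -
    have "ptrace_last d (PiP P) $$ (a, b) = (\<Sum>c<d. P $$ (c, a) * cnj (P $$ (c, b)))"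
      using that PiP_carrier[OF cP] mult_add_less_mult[OF that(1)] mult_add_less_mult[OF that(2)]
      by (auto simp: ptrace_last_def PiP_index[OF cP] intro!: sum.cong)
    then show ?thesis
      using assms that by (simp add: unitary_mat_def)
  qed
  then have "ptrace_last d (PiP P) = 1\<^sub>m d"
    using PiP_carrier[OF cP] by (intro eq_matI) (auto simp: ptrace_last_def)
  then show ?thesis
    unfolding cptp_choi_def using psd_ketbra[OF ketbra_PiP[OF cP]] by simp
qed

lemma mtrace_ptrace_last:
  assumes "M \<in> carrier_mat (q * d) (q * d)" "0 < d"
  shows "mtrace (ptrace_last d M) = mtrace M"
proof -
  have "mtrace (ptrace_last d M) = (\<Sum>a<q. \<Sum>c<d. M $$ (a * d + c, a * d + c))"
    using assms by (simp add: mtrace_def ptrace_last_def mult_add_less_mult)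
  also have "\<dots> = mtrace M"
    using assms by (simp add: mtrace_def sum_lessThan_mult)
  finally show ?thesis .
qed

lemma mtrace_kron_one:
  assumes "A \<in> carrier_mat q q"
  shows "mtrace (kron A (1\<^sub>m d)) = of_nat d * mtrace A"
proof -
  have "mtrace (kron A (1\<^sub>m d)) = (\<Sum>a<q. \<Sum>b<d. kron A (1\<^sub>m d) $$ (a * d + b, a * d + b))"
    using kron_carrier[OF assms, of "1\<^sub>m d" d] by (simp add: mtrace_def sum_lessThan_mult)
  also have "\<dots> = (\<Sum>a<q. \<Sum>b<d. A $$ (a, a))"
    using mult_add_less_mult by (intro sum.cong refl) (simp add: kron_index[OF assms one_carrier_mat])
  also have "\<dots> = of_nat d * mtrace A"
    using assms by (simp add: mtrace_def sum_distrib_left)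
  finally show ?thesis .
qed

lemma mtrace_process_tensor:
  assumes "process_tensor n k Ups"
  shows "mtrace Ups = of_nat (2 ^ n) ^ Suc k"
proof -
  let ?d = "2 ^ n :: nat"
  obtain U where "U k = Ups" and cU: "\<forall>j\<le>k. U j \<in> carrier_mat (?d ^ (2 * Suc j)) (?d ^ (2 * Suc j))"
    and U0: "ptrace_last ?d (U 0) = 1\<^sub>m ?d"
    and Uj: "\<forall>j\<in>{1..k}. ptrace_last ?d (U j) = kron (U (j - 1)) (1\<^sub>m ?d)"
    using assms unfolding process_tensor_def Let_def by blast
  have dim: "?d ^ (2 * Suc j) = ?d ^ Suc (2 * j) * ?d" for j
    by (simp add: mult_ac)
  have "mtrace (U j) = of_nat ?d ^ Suc j" if "j \<le> k" for j
    using that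
  proof (induction j)
    case 0
    have "U 0 \<in> carrier_mat (?d ^ Suc (2 * 0) * ?d) (?d ^ Suc (2 * 0) * ?d)"
      using cU unfolding dim by blast
    then have "mtrace (U 0) = mtrace (ptrace_last ?d (U 0))"
      by (simp add: mtrace_ptrace_last)
    then show ?case by (simp add: U0 mtrace_def)
  next
    case (Suc j)
    have "U (Suc j) \<in> carrier_mat (?d ^ Suc (2 * Suc j) * ?d) (?d ^ Suc (2 * Suc j) * ?d)"
      using cU Suc.prems unfolding dim by blast
    then have "mtrace (U (Suc j)) = mtrace (ptrace_last ?d (U (Suc j)))"
      by (simp add: mtrace_ptrace_last)
    also have "\<dots> = mtrace (kron (U j) (1\<^sub>m ?d))"
      using Suc.prems Uj by simp
    also have "\<dots> = of_nat ?d * mtrace (U j)"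
      using Suc.prems cU by (intro mtrace_kron_one[of _ "?d ^ (2 * Suc j)"]) simp
    finally show ?case
      using Suc by simp
  qed
  then show ?thesis
    using \<open>U k = Ups\<close> by blast
qed

section \<open>The twirled process tensor\<close>

lemma mult_mult_index:
  assumes "A \<in> carrier_mat D D" "B \<in> carrier_mat D D" "C \<in> carrier_mat D D" "a < D" "b < D"
  shows "(A * B * C) $$ (a, b) = (\<Sum>e<D. \<Sum>c<D. A $$ (a, c) * B $$ (c, e) * C $$ (e, b))"
proof -
  have "(A * B * C) $$ (a, b) = (\<Sum>c<D. \<Sum>e<D. A $$ (a, c) * B $$ (c, e) * C $$ (e, b))"
    using assms by (simp add: scalar_prod_def atLeast0LessThan sum_distrib_left mult.assoc)
  also have "\<dots> = (\<Sum>e<D. \<Sum>c<D. A $$ (a, c) * B $$ (c, e) * C $$ (e, b))"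
    by (rule sum.swap)
  finally show ?thesis .
qed

lemma sum_twirl_sandwich_index:
  assumes U: "Ups \<in> carrier_mat ((2^n * 2^n) ^ L) ((2^n * 2^n) ^ L)"
    and ab: "a < (2^n * 2^n) ^ L" "b < (2^n * 2^n) ^ L"
  shows "(\<Sum>Ps\<in>lists_of_length L (paulis n). (twirl_op Ps * Ups * twirl_op Ps) $$ (a, b))
    = (\<Sum>Ps\<in>lists_of_length L (paulis n). traj_weight Ups Ps * traj_op Ps $$ (a, b))"
proof -
  let ?D = "(2^n * 2^n) ^ L" and ?T = "lists_of_length L (paulis n)"
  have "(\<Sum>Ps\<in>?T. (twirl_op Ps * Ups * twirl_op Ps) $$ (a, b))
      = (\<Sum>Ps\<in>?T. \<Sum>e<?D. \<Sum>c<?D. twirl_op Ps $$ (a, c) * Ups $$ (c, e) * twirl_op Ps $$ (e, b))"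
    using twirl_op_carrier U ab by (intro sum.cong refl mult_mult_index) auto
  also have "\<dots> = (\<Sum>e<?D. \<Sum>c<?D. \<Sum>Ps\<in>?T. twirl_op Ps $$ (a, c) * Ups $$ (c, e) * twirl_op Ps $$ (e, b))"
    by (subst sum.swap) (intro sum.cong refl sum.swap)
  also have "\<dots> = (\<Sum>e<?D. \<Sum>c<?D. Ups $$ (c, e) * (\<Sum>Ps\<in>?T. twirl_op Ps $$ (a, c) * twirl_op Ps $$ (e, b)))"
    by (simp add: sum_distrib_left mult_ac)
  also have "\<dots> = (\<Sum>e<?D. \<Sum>c<?D. Ups $$ (c, e) * (\<Sum>Ps\<in>?T. traj_op Ps $$ (e, c) * traj_op Ps $$ (a, b)))"
    using ab by (intro sum.cong refl) (simp add: sum_twirl_op_entries_fierz)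
  also have "\<dots> = (\<Sum>e<?D. \<Sum>c<?D. \<Sum>Ps\<in>?T. traj_op Ps $$ (e, c) * Ups $$ (c, e) * traj_op Ps $$ (a, b))"
    by (simp add: sum_distrib_left mult_ac)
  also have "\<dots> = (\<Sum>Ps\<in>?T. \<Sum>e<?D. \<Sum>c<?D. traj_op Ps $$ (e, c) * Ups $$ (c, e) * traj_op Ps $$ (a, b))"
    by (subst sum.swap) (intro sum.cong refl sum.swap)
  also have "\<dots> = (\<Sum>Ps\<in>?T. (\<Sum>e<?D. \<Sum>c<?D. traj_op Ps $$ (e, c) * Ups $$ (c, e)) * traj_op Ps $$ (a, b))"
    by (simp add: sum_distrib_right)
  also have "\<dots> = (\<Sum>Ps\<in>?T. traj_weight Ups Ps * traj_op Ps $$ (a, b))"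
    by (intro sum.cong refl) (simp add: traj_weight_def mtrace_mult[OF traj_op_carrier U])
  finally show ?thesis .
qed

lemma traj_norm_eq_mtrace:
  assumes U: "Ups \<in> carrier_mat ((2^n * 2^n) ^ Suc k) ((2^n * 2^n) ^ Suc k)"
  shows "traj_norm n k Ups = of_nat (2 ^ n) ^ Suc k * mtrace Ups"
proof -
  let ?D = "(2^n * 2^n) ^ Suc k" and ?T = "lists_of_length (Suc k) (paulis n)"
  have "traj_norm n k Ups = (\<Sum>Ps\<in>?T. \<Sum>i<?D. \<Sum>j<?D. traj_op Ps $$ (i, j) * Ups $$ (j, i))"
    unfolding traj_norm_def trajectories_def traj_weight_def
    by (intro sum.cong refl) (simp add: mtrace_mult[OF traj_op_carrier U])
  also have "\<dots> = (\<Sum>i<?D. \<Sum>j<?D. \<Sum>Ps\<in>?T. traj_op Ps $$ (i, j) * Ups $$ (j, i))"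
    by (subst sum.swap) (intro sum.cong refl sum.swap)
  also have "\<dots> = (\<Sum>i<?D. \<Sum>j<?D. (\<Sum>Ps\<in>?T. traj_op Ps $$ (i, j)) * Ups $$ (j, i))"
    by (simp add: sum_distrib_right)
  also have "\<dots> = (\<Sum>i<?D. \<Sum>j<?D. (if i = j then (2 ^ n) ^ Suc k else 0) * Ups $$ (j, i))"
    by (intro sum.cong refl) (simp add: sum_traj_op_entries)
  also have "\<dots> = of_nat (2 ^ n) ^ Suc k * mtrace Ups"
    using U by (simp add: mtrace_def sum_distrib_left if_distrib if_distribR sum.delta cong: if_cong)
  finally show ?thesis .
qed

lemma psd_process_tensor:
  assumes "process_tensor n k Ups"
  shows "psd ((2^n * 2^n) ^ Suc k) Ups"
proof -
  have "((2::nat) ^ n) ^ (2 * Suc k) = (2^n * 2^n) ^ Suc k"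
    by (simp add: power_mult power2_eq_square)
  with assms show ?thesis
    unfolding process_tensor_def Let_def by metis
qed

lemma traj_norm_process_tensor:
  assumes "process_tensor n k Ups"
  shows "traj_norm n k Ups = of_nat (4 ^ n) ^ Suc k"
proof -
  have "Ups \<in> carrier_mat ((2^n * 2^n) ^ Suc k) ((2^n * 2^n) ^ Suc k)"
    using psd_carrier[OF psd_process_tensor[OF assms]] .
  then have "traj_norm n k Ups = of_nat (2 ^ n) ^ Suc k * of_nat (2 ^ n) ^ Suc k"
    using mtrace_process_tensor[OF assms] by (simp add: traj_norm_eq_mtrace)
  also have "\<dots> = of_nat (2 ^ n * 2 ^ n) ^ Suc k"
    by (simp only: of_nat_mult power_mult_distrib)
  also have "(2::nat) ^ n * 2 ^ n = 4 ^ n"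
    by (simp flip: power_mult_distrib)
  finally show ?thesis .
qed

lemma pauli_twirl_process_tensor:
  assumes "process_tensor n k Ups"
  shows "pauli_twirl n k Ups
    = msum (dim_row Ups) (\<lambda>Ps. traj_prob n k Ups Ps \<cdot>\<^sub>m traj_op Ps) (trajectories n k)"
proof -
  let ?D = "(2^n * 2^n) ^ Suc k" and ?T = "trajectories n k"
  have U: "Ups \<in> carrier_mat ?D ?D"
    using psd_carrier[OF psd_process_tensor[OF assms]] .
  have T: "?T = lists_of_length (Suc k) (paulis n)"
    by (simp add: trajectories_def)
  have "(\<Sum>Ps\<in>?T. (1 / of_nat (4 ^ n) ^ Suc k \<cdot>\<^sub>m (twirl_op Ps * Ups * twirl_op Ps)) $$ (a, b))
      = (\<Sum>Ps\<in>?T. (traj_prob n k Ups Ps \<cdot>\<^sub>m traj_op Ps) $$ (a, b))"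
    if "a < ?D" "b < ?D" for a b
  proof -
    have "(\<Sum>Ps\<in>?T. (1 / of_nat (4 ^ n) ^ Suc k \<cdot>\<^sub>m (twirl_op Ps * Ups * twirl_op Ps)) $$ (a, b))
        = (\<Sum>Ps\<in>?T. (twirl_op Ps * Ups * twirl_op Ps) $$ (a, b)) / of_nat (4 ^ n) ^ Suc k"
      unfolding sum_divide_distrib using that
      by (intro sum.cong refl) (simp add: T twirl_op_carrier[of _ "Suc k" n, THEN carrier_matD(1)]
          twirl_op_carrier[of _ "Suc k" n, THEN carrier_matD(2)])
    also have "\<dots> = (\<Sum>Ps\<in>?T. traj_weight Ups Ps * traj_op Ps $$ (a, b)) / traj_norm n k Ups"
      using sum_twirl_sandwich_index[OF U that] by (simp add: T traj_norm_process_tensor[OF assms])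
    also have "\<dots> = (\<Sum>Ps\<in>?T. (traj_prob n k Ups Ps \<cdot>\<^sub>m traj_op Ps) $$ (a, b))"
      unfolding sum_divide_distrib traj_prob_def using that
      by (intro sum.cong refl) (simp add: T traj_op_carrier[of _ "Suc k" n, THEN carrier_matD(1)]
          traj_op_carrier[of _ "Suc k" n, THEN carrier_matD(2)])
    finally show ?thesis .
  qed
  then show ?thesis
    using U by (auto simp: pauli_twirl_def msum_def twirl_op_def Let_def intro!: cong_mat)
qed

lemma process_separable_msumI:
  assumes "finite T"
    and p: "\<forall>x\<in>T. p x \<in> \<real> \<and> 0 \<le> Re (p x)" "(\<Sum>x\<in>T. p x) = 1"
    and C: "\<forall>x\<in>T. length (C x) = Suc k \<and> (\<forall>c\<in>set (C x). cptp_choi d c)"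
  shows "process_separable d k (msum D (\<lambda>x. p x \<cdot>\<^sub>m kron_list (C x)) T)"
proof -
  obtain h where h: "bij_betw h {0..<card T} T"
    using ex_bij_betw_nat_finite[OF \<open>finite T\<close>] by blast
  let ?I = "{0..<card T}"
  have hT: "h i \<in> T" if "i \<in> ?I" for i
    using bij_betw_apply[OF h that] .
  have real: "complex_of_real (Re (p (h i))) = p (h i)" if "i \<in> ?I" for i
    using p(1) hT[OF that] by (simp add: complex_eq_iff Reals_def)
  have "(\<Sum>i\<in>?I. Re (p (h i))) = Re (\<Sum>x\<in>T. p x)"
    by (simp add: sum.reindex_bij_betw[OF h] flip: Re_sum)
  moreover have "msum D (\<lambda>x. p x \<cdot>\<^sub>m kron_list (C x)) T
      = msum D (\<lambda>i. complex_of_real (Re (p (h i))) \<cdot>\<^sub>m kron_list (C (h i))) ?I"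
    unfolding msum_def
    by (intro cong_mat refl) (auto simp: real sum.reindex_bij_betw[OF h, symmetric] intro!: sum.cong)
  ultimately show ?thesis
    unfolding process_separable_def using p C hT
    by (intro exI[of _ ?I] exI[of _ "\<lambda>i. Re (p (h i))"] exI[of _ "\<lambda>i. C (h i)"]) (auto simp: msum_def)
qed

theorem theorem1:
  fixes n k :: nat and Ups :: "complex mat"
  assumes "process_tensor n k Ups"
  shows "(\<forall>Ps\<in>trajectories n k. traj_weight Ups Ps \<in> \<real> \<and> 0 \<le> Re (traj_weight Ups Ps))
    \<and> pauli_twirl n k Ups
        = msum (dim_row Ups) (\<lambda>Ps. traj_prob n k Ups Ps \<cdot>\<^sub>m traj_op Ps) (trajectories n k)
    \<and> (\<forall>Ps\<in>trajectories n k. traj_prob n k Ups Ps \<in> \<real> \<and> 0 \<le> Re (traj_prob n k Ups Ps))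
    \<and> (\<Sum>Ps\<in>trajectories n k. traj_prob n k Ups Ps) = 1
    \<and> process_separable (2 ^ n) k (pauli_twirl n k Ups)"
proof -
  let ?T = "trajectories n k"
  have T: "?T = lists_of_length (Suc k) (paulis n)"
    by (simp add: trajectories_def)
  have "psd ((2^n * 2^n) ^ Suc k) Ups"
    using psd_process_tensor[OF assms] .
  then have weight: "\<forall>Ps\<in>?T. traj_weight Ups Ps \<in> \<real> \<and> 0 \<le> Re (traj_weight Ups Ps)"
    unfolding T traj_weight_def using ketbra_traj_op mtrace_ketbra_mult_psd_nonneg by fastforce
  have norm: "traj_norm n k Ups = of_nat (4 ^ n) ^ Suc k"
    using traj_norm_process_tensor[OF assms] .
  have prob: "\<forall>Ps\<in>?T. traj_prob n k Ups Ps \<in> \<real> \<and> 0 \<le> Re (traj_prob n k Ups Ps)"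
    using weight by (simp add: traj_prob_def norm Re_divide_of_nat)
  have total: "(\<Sum>Ps\<in>?T. traj_prob n k Ups Ps) = 1"
    using norm by (simp add: traj_prob_def traj_norm_def flip: sum_divide_distrib)
  have twirl: "pauli_twirl n k Ups = msum (dim_row Ups) (\<lambda>Ps. traj_prob n k Ups Ps \<cdot>\<^sub>m traj_op Ps) ?T"
    using pauli_twirl_process_tensor[OF assms] .
  have "\<forall>Ps\<in>?T. \<forall>c\<in>set (map (\<lambda>ps. PiP (pauli ps)) Ps). cptp_choi (2 ^ n) c"
    using unitary_mat_pauli by (auto simp: T paulis_def intro!: cptp_choi_PiP)
  then have "process_separable (2 ^ n) k (pauli_twirl n k Ups)"
    unfolding twirl traj_op_def using prob total
    by (intro process_separable_msumI) (auto simp: T finite_lists_of_length finite_paulis)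
  with weight twirl prob total show ?thesis
    by blast
qed

end
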